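(* Let $\mathcal S\in\Sigma^n$ be a string and $\pi:[n]\to[n]$ be an order-preserving permutation for $\mathcal S$. Let $i>1$ be an irreducible $\mathrm{LPF}_\pi$ position. Then, for every $j>1$ with $\pi(j-1)<\pi(i-1)$ and $\mathrm{rlce}(i,j)=\mathrm{LPF}_\pi[i]$, it holds that $\mathcal S[i-1]\ne\mathcal S[j-1]$.
   Context: For $i\ne j$, $\mathrm{rlce}(i,j)$ is the length of the longest common prefix of $\mathcal S[i,n]$ and $\mathcal S[j,n]$. A permutation $\pi:[n]\to[n]$ is order-preserving for $\mathcal S$ if for all $i,j\in[n-1]$, $\pi(i)<\pi(j)$ and $\mathcal S[i,i+1]=\mathcal S[j,j+1]$ imply $\pi(i+1)<\pi(j+1)$. $\mathrm{LPF}_\pi[i]=0$ if $\pi(i)=1$, else $\mathrm{LPF}_\pi[i]=\max_{\pi(j)<\pi(i)}\mathrm{rlce}(j,i)$. A position $i\in[n]$ is an irreducible $\mathrm{LPF}_\pi$ position if $i=1$ or $\mathrm{LPF}_\pi[i]\ne\mathrm{LPF}_\pi[i-1]-1$. *)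

theory Defs
  imports Main
begin

text \<open>Strings are lists; positions are 1-based: the character S[i] is S ! (i - 1), for i in [n] = {1..n}.\<close>

definition chr :: "'a list \<Rightarrow> nat \<Rightarrow> 'a" where
  "chr S i = S ! (i - 1)"

fun lcp :: "'a list \<Rightarrow> 'a list \<Rightarrow> nat" where
  "lcp (x # xs) (y # ys) = (if x = y then Suc (lcp xs ys) else 0)"
| "lcp _ _ = 0"

definition rlce :: "'a list \<Rightarrow> nat \<Rightarrow> nat \<Rightarrow> nat" where
  "rlce S i j = lcp (drop (i - 1) S) (drop (j - 1) S)"

definition order_preserving :: "'a list \<Rightarrow> (nat \<Rightarrow> nat) \<Rightarrow> bool" where
  "order_preserving S \<pi> \<longleftrightarrow>
     bij_betw \<pi> {1..length S} {1..length S} \<and>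
     (\<forall>i \<in> {1..length S - 1}. \<forall>j \<in> {1..length S - 1}.
        \<pi> i < \<pi> j \<and> chr S i = chr S j \<and> chr S (i+1) = chr S (j+1)
          \<longrightarrow> \<pi> (i+1) < \<pi> (j+1))"

definition LPF :: "'a list \<Rightarrow> (nat \<Rightarrow> nat) \<Rightarrow> nat \<Rightarrow> nat" where
  "LPF S \<pi> i = (if \<pi> i = 1 then 0
     else Max {rlce S j i | j. j \<in> {1..length S} \<and> \<pi> j < \<pi> i})"

text \<open>Irreducibility compares in the integers, so that LPF[i-1] - 1 may be -1.\<close>
definition irreducible_LPF :: "'a list \<Rightarrow> (nat \<Rightarrow> nat) \<Rightarrow> nat \<Rightarrow> bool" where
  "irreducible_LPF S \<pi> i \<longleftrightarrow> i \<in> {1..length S} \<and>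
     (i = 1 \<or> int (LPF S \<pi> i) \<noteq> int (LPF S \<pi> (i - 1)) - 1)"

end

theory Submission
  imports Defs
begin

text \<open>If \<open>S[i-1] = S[j-1]\<close>, the match of \<open>i\<close> with \<open>j\<close> extends one step to the left, so
  \<open>LPF[i-1] \<ge> LPF[i] + 1\<close>. Conversely, for an order-preserving \<open>\<pi>\<close> a longest match of \<open>i-1\<close>
  with an earlier position \<open>k\<close>, shortened by its first character, is a match of \<open>i\<close> with the
  position \<open>k+1\<close>, which is again earlier; hence \<open>LPF[i-1] \<le> LPF[i] + 1\<close>. Together they give
  \<open>LPF[i] = LPF[i-1] - 1\<close>, so \<open>i\<close> is not irreducible.\<close>

lemma lcp_commute: "lcp xs ys = lcp ys xs"
  by (induction xs ys rule: lcp.induct) auto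

lemma rlce_commute: "rlce S a b = rlce S b a"
  unfolding rlce_def by (rule lcp_commute)

lemma drop_pred_eq_chr_Cons:
  assumes "1 \<le> a" "a \<le> length S"
  shows "drop (a - 1) S = chr S a # drop a S"
  using assms Cons_nth_drop_Suc[of "a - 1" S] unfolding chr_def by simp

lemma rlce_unfold:
  assumes "1 \<le> a" "a \<le> length S" "1 \<le> b" "b \<le> length S"
  shows "rlce S a b = (if chr S a = chr S b then Suc (rlce S (a + 1) (b + 1)) else 0)"
  unfolding rlce_def drop_pred_eq_chr_Cons[OF assms(1,2)] drop_pred_eq_chr_Cons[OF assms(3,4)]
  by simp

lemma rlce_pos_imp_le_length:
  assumes "0 < rlce S a b" "1 \<le> a"
  shows "a \<le> length S"
proof (rule ccontr)
  assume "\<not> a \<le> length S"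
  then have "drop (a - 1) S = []" by simp
  then show False using assms(1) unfolding rlce_def by simp
qed

lemma finite_LPF_candidates:
  "finite {rlce S j x | j. j \<in> {1..length S} \<and> \<pi> j < \<pi> x}"
  by (rule finite_subset[of _ "(\<lambda>j. rlce S j x) ` {1..length S}"]) auto

lemma rlce_le_LPF:
  assumes "\<pi> x \<noteq> 1" "j \<in> {1..length S}" "\<pi> j < \<pi> x"
  shows "rlce S j x \<le> LPF S \<pi> x"
proof -
  have "rlce S j x \<in> {rlce S j x | j. j \<in> {1..length S} \<and> \<pi> j < \<pi> x}"
    using assms(2,3) by blast
  then show ?thesis
    using assms(1) Max_ge[OF finite_LPF_candidates[of S x \<pi>]] unfolding LPF_def by simp
qed

lemma order_preserving_Suc_less:
  assumes "order_preserving S \<pi>" "a \<in> {1..<length S}" "b \<in> {1..<length S}"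
    and "\<pi> a < \<pi> b" "chr S a = chr S b" "chr S (a + 1) = chr S (b + 1)"
  shows "\<pi> (a + 1) < \<pi> (b + 1)"
proof -
  have "a \<in> {1..length S - 1}" "b \<in> {1..length S - 1}" using assms(2,3) by auto
  then show ?thesis using assms(1,4-6) unfolding order_preserving_def by blast
qed

lemma order_preserving_not_first:
  assumes "order_preserving S \<pi>" "j \<in> {1..length S}" "\<pi> j < \<pi> x"
  shows "\<pi> x \<noteq> 1"
  using assms bij_betw_apply[of \<pi> "{1..length S}" "{1..length S}" j]
  unfolding order_preserving_def by auto

lemma order_preserving_has_earlier:
  assumes "order_preserving S \<pi>" "x \<in> {1..length S}" "\<pi> x \<noteq> 1"
  obtains j where "j \<in> {1..length S}" "\<pi> j < \<pi> x"
proof -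
  have bij: "bij_betw \<pi> {1..length S} {1..length S}"
    using assms(1) unfolding order_preserving_def by blast
  then have "\<pi> x \<in> {1..length S}" using assms(2) by (rule bij_betw_apply)
  then have "1 \<in> \<pi> ` {1..length S}" and "1 < \<pi> x"
    using bij assms(3) unfolding bij_betw_def by auto
  then show thesis using that by auto
qed

lemma LPF_attained:
  assumes "order_preserving S \<pi>" "x \<in> {1..length S}" "\<pi> x \<noteq> 1"
  obtains k where "k \<in> {1..length S}" "\<pi> k < \<pi> x" "rlce S k x = LPF S \<pi> x"
proof -
  obtain j where "j \<in> {1..length S}" "\<pi> j < \<pi> x"
    using order_preserving_has_earlier[OF assms] .
  then have "LPF S \<pi> x \<in> {rlce S j x | j. j \<in> {1..length S} \<and> \<pi> j < \<pi> x}"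
    using assms(3) Max_in[OF finite_LPF_candidates[of S x \<pi>]] unfolding LPF_def by auto
  then show thesis using that by auto
qed

lemma LPF_pred_le_Suc_LPF:
  assumes op: "order_preserving S \<pi>" and "1 < i" "i \<le> length S"
  shows "LPF S \<pi> (i - 1) \<le> Suc (LPF S \<pi> i)"
proof (cases "\<pi> (i - 1) = 1")
  case True
  then show ?thesis unfolding LPF_def by simp
next
  case not_first: False
  have "i - 1 \<in> {1..length S}" using assms by auto
  then obtain k where k: "k \<in> {1..length S}" "\<pi> k < \<pi> (i - 1)"
      and k_max: "rlce S k (i - 1) = LPF S \<pi> (i - 1)"
    using LPF_attained[OF op _ not_first] by blast
  show ?thesis
    \<comment> \<open>order preservation needs the first two characters of the match to agree\<close>
  proof (cases "LPF S \<pi> (i - 1) \<le> 1")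
    case False
    then have same_chr: "chr S k = chr S (i - 1)"
      and shift: "rlce S k (i - 1) = Suc (rlce S (k + 1) i)"
      using k k_max rlce_unfold[of k S "i - 1"] assms by (auto split: if_splits)
    then have "0 < rlce S (k + 1) i" using False k_max by simp
    moreover from this have "k + 1 \<le> length S" by (auto intro: rlce_pos_imp_le_length)
    ultimately have same_succ_chr: "chr S (k + 1) = chr S (i - 1 + 1)"
      using rlce_unfold[of "k + 1" S i] assms by (auto split: if_splits)
    have "k \<in> {1..<length S}" "i - 1 \<in> {1..<length S}"
      using k(1) \<open>k + 1 \<le> length S\<close> assms(2,3) by auto
    then have earlier: "\<pi> (k + 1) < \<pi> i"
      using order_preserving_Suc_less[OF op _ _ k(2) same_chr same_succ_chr] assms(2) by simp
    have "k + 1 \<in> {1..length S}" using \<open>k + 1 \<le> length S\<close> by simp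
    then have "rlce S (k + 1) i \<le> LPF S \<pi> i"
      using rlce_le_LPF[of \<pi> i "k + 1" S] order_preserving_not_first[OF op _ earlier] earlier
      by blast
    then show ?thesis using shift k_max by simp
  qed simp
qed

theorem lemma14:
  fixes S :: "'a list" and \<pi> :: "nat \<Rightarrow> nat" and i j :: nat
  assumes "order_preserving S \<pi>"
    and "i > 1" and "irreducible_LPF S \<pi> i"
    and "j > 1" and "j \<le> length S"
    and "\<pi> (j - 1) < \<pi> (i - 1)"
    and "rlce S i j = LPF S \<pi> i"
  shows "chr S (i - 1) \<noteq> chr S (j - 1)"
proof
  assume same_chr: "chr S (i - 1) = chr S (j - 1)"
  have "i \<le> length S" and irr: "int (LPF S \<pi> i) \<noteq> int (LPF S \<pi> (i - 1)) - 1"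
    using assms(2,3) unfolding irreducible_LPF_def by auto
  have j_pred: "j - 1 \<in> {1..length S}" using assms by auto
  have "rlce S (j - 1) (i - 1) = Suc (rlce S j i)"
    using rlce_unfold[of "j - 1" S "i - 1"] same_chr assms \<open>i \<le> length S\<close> by auto
  then have "Suc (LPF S \<pi> i) \<le> LPF S \<pi> (i - 1)"
    using rlce_le_LPF[OF order_preserving_not_first[OF assms(1) j_pred assms(6)] j_pred assms(6)]
      assms(7) rlce_commute by metis
  moreover have "LPF S \<pi> (i - 1) \<le> Suc (LPF S \<pi> i)"
    using LPF_pred_le_Suc_LPF assms(1,2) \<open>i \<le> length S\<close> by blast
  ultimately show False using irr by simp
qed

end
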